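(* With the notation and hypotheses on $A_\kappa,B_\kappa,W_P,W_Q,D_P,D_Q,\lambda_2$ and the function $F$ as in the context, let $V'\in\mathbb{R}^{n\times k}$ have strictly positive entries, and for $V\in\mathbb{R}^{n\times k}$ with strictly positive entries define $$\begin{aligned}J(V,V')=\sum_{\kappa=1}^{2}\Big[&-2\sum_{i,s}(B_\kappa^+)_{is}v'_{is}\Big(1+\log\frac{v_{is}}{v'_{is}}\Big)+\sum_{i,s}(B_\kappa^-)_{is}\frac{v_{is}^2+v_{is}'^2}{v'_{is}}+\sum_{i,s}\frac{(V'A_\kappa^+)_{is}v_{is}^2}{v'_{is}}\\&-\sum_{i,s,l}(A_\kappa^-)_{sl}v'_{is}v'_{il}\Big(1+\log\frac{v_{is}v_{il}}{v'_{is}v'_{il}}\Big)\Big]\\ +\lambda_2\sum_{G\in\{P,Q\}}\Big[&\sum_{i,s}\frac{(D_GV')_{is}v_{is}^2}{v'_{is}}-\sum_{j,l,s}(W_G)_{jl}v'_{js}v'_{ls}\Big(1+\log\frac{v_{js}v_{ls}}{v'_{js}v'_{ls}}\Big)\Big].\end{aligned}$$ Then (i) $J(V,V')\ge F(V)$ and $J(V,V)=F(V)$ for all such $V,V'$, i.e. $J$ is an auxiliary function for $F$; (ii) $J(\cdot,V')$ is convex on the open positive orthant; and (iii) if the matrices $\Delta_1=B_1^++B_2^++V'(A_1^-+A_2^-)+\lambda_2(W_P+W_Q)V'$ and $\Delta_2=B_1^-+B_2^-+V'(A_1^++A_2^+)+\lambda_2(D_P+D_Q)V'$ have strictly positive entries,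 then the global minimizer of $J(\cdot,V')$ over the positive orthant is given by $v_{ij}=v'_{ij}\sqrt{(\Delta_1)_{ij}/(\Delta_2)_{ij}}$.
   Context: Setting: $n,k\ge1$, $\lambda_2\ge0$; $A_1,A_2\in\mathbb{R}^{k\times k}$ symmetric; $B_1,B_2\in\mathbb{R}^{n\times k}$; $W_P,W_Q\in\mathbb{R}^{n\times n}$ symmetric with nonnegative entries; $D_P,D_Q$ diagonal with $(D_G)_{ii}=\sum_j(W_G)_{ij}$. For a real matrix $M$, $M^+_{ij}=(|M_{ij}|+M_{ij})/2$ and $M^-_{ij}=(|M_{ij}|-M_{ij})/2$. For $V=[v_{ij}]\in\mathbb{R}^{n\times k}$, $F(V)=\mathrm{Tr}\big(-2V^TB_1^+ + 2V^TB_1^- + VA_1^+V^T - VA_1^-V^T - 2V^TB_2^+ + 2V^TB_2^- + VA_2^+V^T - VA_2^-V^T + \lambda_2 V^TD_PV - \lambda_2 V^TW_PV + \lambda_2 V^TD_QV - \lambda_2 V^TW_QV\big)$. *)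

theory Defs
  imports "HOL-Analysis.Analysis"
begin

text \<open>Matrices are rendered as Cartesian-product types: an n-by-k real matrix is
  a value of type real^'k^'n (row index in 'n, column index in 'k), so
  M $ i $ j is the entry in row i, column j.\<close>

definition pospart :: "real^'c^'r \<Rightarrow> real^'c^'r" where
  "pospart M = (\<chi> i j. (\<bar>M $ i $ j\<bar> + M $ i $ j) / 2)"

definition negpart :: "real^'c^'r \<Rightarrow> real^'c^'r" where
  "negpart M = (\<chi> i j. (\<bar>M $ i $ j\<bar> - M $ i $ j) / 2)"

definition degmat :: "real^'n^'n \<Rightarrow> real^'n^'n" where
  "degmat W = (\<chi> i j. if i = j then (\<Sum>l\<in>UNIV. W $ i $ l) else 0)"

definition posorth :: "(real^'c^'r) set" where
  "posorth = {V. \<forall>i j. V $ i $ j > 0}"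

text \<open>The objective F (trace of a sum = sum of traces of the square summands).\<close>
definition Fobj ::
  "real \<Rightarrow> real^'k^'k \<Rightarrow> real^'k^'k \<Rightarrow> real^'k^'n \<Rightarrow> real^'k^'n
     \<Rightarrow> real^'n^'n \<Rightarrow> real^'n^'n \<Rightarrow> real^'k^'n \<Rightarrow> real" where
  "Fobj lam2 A1 A2 B1 B2 WP WQ V =
     - 2 * trace (transpose V ** pospart B1) + 2 * trace (transpose V ** negpart B1)
     + trace (V ** pospart A1 ** transpose V) - trace (V ** negpart A1 ** transpose V)
     - 2 * trace (transpose V ** pospart B2) + 2 * trace (transpose V ** negpart B2)
     + trace (V ** pospart A2 ** transpose V) - trace (V ** negpart A2 ** transpose V)
     + lam2 * trace (transpose V ** degmat WP ** V) - lam2 * trace (transpose V ** WP ** V)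
     + lam2 * trace (transpose V ** degmat WQ ** V) - lam2 * trace (transpose V ** WQ ** V)"

definition Jpart :: "real^'k^'k \<Rightarrow> real^'k^'n \<Rightarrow> real^'k^'n \<Rightarrow> real^'k^'n \<Rightarrow> real" where
  "Jpart A B V V' =
     - 2 * (\<Sum>i\<in>UNIV. \<Sum>s\<in>UNIV. pospart B $ i $ s * V' $ i $ s
              * (1 + ln (V $ i $ s / V' $ i $ s)))
     + (\<Sum>i\<in>UNIV. \<Sum>s\<in>UNIV. negpart B $ i $ s
              * ((V $ i $ s)\<^sup>2 + (V' $ i $ s)\<^sup>2) / V' $ i $ s)
     + (\<Sum>i\<in>UNIV. \<Sum>s\<in>UNIV. (V' ** pospart A) $ i $ s * (V $ i $ s)\<^sup>2 / V' $ i $ s)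
     - (\<Sum>i\<in>UNIV. \<Sum>s\<in>UNIV. \<Sum>l\<in>UNIV. negpart A $ s $ l * V' $ i $ s * V' $ i $ l
              * (1 + ln ((V $ i $ s * V $ i $ l) / (V' $ i $ s * V' $ i $ l))))"

definition Jgraph :: "real^'n^'n \<Rightarrow> real^'k^'n \<Rightarrow> real^'k^'n \<Rightarrow> real" where
  "Jgraph W V V' =
     (\<Sum>i\<in>UNIV. \<Sum>s\<in>UNIV. (degmat W ** V') $ i $ s * (V $ i $ s)\<^sup>2 / V' $ i $ s)
     - (\<Sum>j\<in>UNIV. \<Sum>l\<in>UNIV. \<Sum>s\<in>UNIV. W $ j $ l * V' $ j $ s * V' $ l $ s
              * (1 + ln ((V $ j $ s * V $ l $ s) / (V' $ j $ s * V' $ l $ s))))"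

definition Jaux ::
  "real \<Rightarrow> real^'k^'k \<Rightarrow> real^'k^'k \<Rightarrow> real^'k^'n \<Rightarrow> real^'k^'n
     \<Rightarrow> real^'n^'n \<Rightarrow> real^'n^'n \<Rightarrow> real^'k^'n \<Rightarrow> real^'k^'n \<Rightarrow> real" where
  "Jaux lam2 A1 A2 B1 B2 WP WQ V V' =
     Jpart A1 B1 V V' + Jpart A2 B2 V V' + lam2 * (Jgraph WP V V' + Jgraph WQ V V')"

end

theory Submission
  imports Defs
begin

text \<open>
  The logarithmic terms of \<open>J\<close> are bounded by the tangent-line inequality
  \<open>y (1 + ln (x / y)) \<le> x\<close>, and the quadratic term \<open>V A\<^sup>+ V\<^sup>T\<close> by the weighted squares
  coming from \<open>2 a b \<le> a\<^sup>2 t + b\<^sup>2 / t\<close>; this gives \<open>F \<le> J\<close>, with equality when \<open>V = V'\<close>.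
  Expanding the logarithms with the symmetry of \<open>A\<^sup>-\<close> and \<open>W\<close>, \<open>J(\<cdot>, V')\<close> differs by a constant from
  \<open>\<Sum> (\<Delta>\<^sub>2)\<^sub>i\<^sub>s v\<^sub>i\<^sub>s\<^sup>2 / v'\<^sub>i\<^sub>s - 2 v'\<^sub>i\<^sub>s (\<Delta>\<^sub>1)\<^sub>i\<^sub>s ln v\<^sub>i\<^sub>s\<close>, a sum of one-variable functions
  \<open>a t\<^sup>2 - b ln t\<close> with \<open>a, b \<ge> 0\<close>: convex, and for \<open>a, b > 0\<close> uniquely minimised at
  \<open>t = v' sqrt (\<Delta>\<^sub>1 / \<Delta>\<^sub>2)\<close>.
\<close>

lemma matrix_matrix_mult_component:
  "(X ** Z) $ i $ j = (\<Sum>k\<in>UNIV. X $ i $ k * Z $ k $ j)"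
  by (simp add: matrix_matrix_mult_def)

lemma pospart_nonneg: "pospart M $ i $ j \<ge> 0"
  by (simp add: pospart_def)

lemma negpart_nonneg: "negpart M $ i $ j \<ge> 0"
  by (simp add: negpart_def)

lemma posorthD: "V \<in> posorth \<Longrightarrow> V $ i $ j > 0"
  by (simp add: posorth_def)

lemma symmetric_matrix_component: "transpose A = A \<Longrightarrow> A $ i $ j = A $ j $ i"
  by (metis transpose_def vec_lambda_beta)

lemma transpose_pospart: "transpose (pospart A) = pospart (transpose A)"
  by (simp add: pospart_def transpose_def)

lemma transpose_negpart: "transpose (negpart A) = negpart (transpose A)"
  by (simp add: negpart_def transpose_def)

lemma symmetric_pospart: "transpose A = A \<Longrightarrow> transpose (pospart A) = pospart A"
  by (simp add: transpose_pospart)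

lemma symmetric_negpart: "transpose A = A \<Longrightarrow> transpose (negpart A) = negpart A"
  by (simp add: transpose_negpart)

lemma mult_symmetric_component:
  fixes A :: "real^'k^'k" and Y :: "real^'k^'n"
  assumes "transpose A = A"
  shows "(Y ** A) $ i $ s = (\<Sum>l\<in>UNIV. A $ s $ l * Y $ i $ l)"
  unfolding matrix_matrix_mult_component
proof (rule sum.cong[OF refl])
  fix l
  show "Y $ i $ l * A $ l $ s = A $ s $ l * Y $ i $ l"
    using symmetric_matrix_component[OF assms, of l s] by (simp add: mult.commute)
qed

lemma matrix_add_rdistrib: "(A + B) ** C = A ** C + B ** C"
  by (vector matrix_matrix_mult_def sum.distrib[symmetric] field_simps)

lemma matrix_mult_nonneg_component:
  "(\<And>i j. X $ i $ j \<ge> 0) \<Longrightarrow> (\<And>i j. Z $ i $ j \<ge> (0::real)) \<Longrightarrow> (X ** Z) $ i $ s \<ge> 0"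
  by (simp add: matrix_matrix_mult_component sum_nonneg)

lemma degmat_nonneg: "(\<And>i j. W $ i $ j \<ge> 0) \<Longrightarrow> degmat W $ i $ j \<ge> (0::real)"
  by (simp add: degmat_def sum_nonneg)

lemma sum_rotate3: "(\<Sum>j\<in>A. \<Sum>l\<in>B. \<Sum>s\<in>C. f j l s) = (\<Sum>s\<in>C. \<Sum>j\<in>A. \<Sum>l\<in>B. f j l s)"
  by (simp add: sum.swap[of _ C])

lemma degmat_mult_component: "(degmat W ** Y) $ i $ s = (\<Sum>l\<in>UNIV. W $ i $ l) * Y $ i $ s"
  by (simp add: matrix_matrix_mult_component degmat_def if_distrib if_distribR cong: if_cong)

lemma convex_posorth: "convex (posorth :: (real^'k^'n) set)"
  unfolding convex_def posorth_def
  by (auto simp: add_pos_nonneg add_nonneg_pos le_less)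

lemma trace_transpose_mult:
  "trace (transpose V ** M) = (\<Sum>i\<in>UNIV. \<Sum>s\<in>UNIV. V $ i $ s * (M :: real^'k^'n) $ i $ s)"
  unfolding trace_def matrix_matrix_mult_component by (simp add: transpose_def, rule sum.swap)

lemma trace_mult_mult_transpose:
  "trace (V ** A ** transpose V)
     = (\<Sum>i\<in>UNIV. \<Sum>s\<in>UNIV. \<Sum>l\<in>UNIV. V $ i $ s * (A :: real^'k^'k) $ s $ l * (V :: real^'k^'n) $ i $ l)"
  unfolding trace_def matrix_matrix_mult_component
  by (simp add: transpose_def sum_distrib_right, rule sum.cong[OF refl], rule sum.swap)

lemma trace_transpose_mult_mult:
  "trace (transpose V ** W ** V)
     = (\<Sum>j\<in>UNIV. \<Sum>l\<in>UNIV. \<Sum>s\<in>UNIV. (V :: real^'k^'n) $ j $ s * (W :: real^'n^'n) $ j $ l * V $ l $ s)"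
proof -
  have "trace (transpose V ** W ** V) = (\<Sum>s\<in>UNIV. \<Sum>l\<in>UNIV. \<Sum>j\<in>UNIV. V $ j $ s * W $ j $ l * V $ l $ s)"
    unfolding trace_def matrix_matrix_mult_component by (simp add: transpose_def sum_distrib_right)
  also have "\<dots> = (\<Sum>s\<in>UNIV. \<Sum>j\<in>UNIV. \<Sum>l\<in>UNIV. V $ j $ s * W $ j $ l * V $ l $ s)"
    by (rule sum.cong[OF refl], rule sum.swap)
  also have "\<dots> = (\<Sum>j\<in>UNIV. \<Sum>l\<in>UNIV. \<Sum>s\<in>UNIV. V $ j $ s * W $ j $ l * V $ l $ s)"
    by (rule sum_rotate3[symmetric])
  finally show ?thesis .
qed

lemma mult_one_plus_ln_div_le:
  fixes x y :: real
  assumes "x > 0" "y > 0"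
  shows "y * (1 + ln (x / y)) \<le> x"
proof -
  have "y * (1 + ln (x / y)) \<le> y * (x / y)"
    using assms ln_le_minus_one[of "x / y"] by (intro mult_left_mono) auto
  then show ?thesis using assms by simp
qed

lemma convex_on_square_minus_ln:
  fixes a b :: real
  assumes "a \<ge> 0" "b \<ge> 0"
  shows "convex_on {0<..} (\<lambda>t. a * t\<^sup>2 - b * ln t)"
  using assms convex_on_subset[OF convex_power2] ln_concave
  by (intro convex_on_diff convex_on_cmul concave_on_cmul) auto

text \<open>With \<open>r = (t/t\<^sub>0)\<^sup>2\<close> the excess over the minimum is \<open>y q (r - 1 - ln r)\<close>.\<close>
lemma square_minus_ln_minimum:
  fixes p q y t :: real
  assumes p: "p > 0" and q: "q > 0" and y: "y > 0" and t: "t > 0"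
  defines "f \<equiv> \<lambda>t. p * t\<^sup>2 / y - 2 * y * q * ln t"
    and "t0 \<equiv> y * sqrt (q / p)"
  shows "f t0 \<le> f t" and "f t \<le> f t0 \<Longrightarrow> t = t0"
proof -
  have t0: "t0 > 0" using p q y unfolding t0_def by simp
  define r where "r = t\<^sup>2 / t0\<^sup>2"
  have r: "r > 0" using t t0 unfolding r_def by simp
  have ln_r: "ln r = 2 * (ln t - ln t0)"
    using t t0 unfolding r_def by (simp add: ln_div ln_realpow)
  have "p * t0\<^sup>2 / y = y * q"
    using p y q unfolding t0_def by (simp add: power2_eq_square power_mult_distrib field_simps)
  moreover have "p * t\<^sup>2 / y = p * t0\<^sup>2 / y * r"
    using t0 unfolding r_def by simp
  ultimately have excess: "f t - f t0 = y * q * (r - 1 - ln r)"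
    unfolding f_def ln_r by (simp add: algebra_simps)
  have "r - 1 - ln r \<ge> 0" using ln_le_minus_one[OF r] by simp
  then show "f t0 \<le> f t" using excess y q by (metis diff_ge_0_iff_ge mult_nonneg_nonneg less_imp_le)
  assume "f t \<le> f t0"
  then have "y * q * (r - 1 - ln r) \<le> 0" using excess by simp
  then have "r - 1 - ln r \<le> 0"
    using y q by (simp add: mult_le_0_iff)
  then have "r = 1" using ln_le_minus_one[OF r] ln_eq_minus_one[OF r] by simp
  then have "t\<^sup>2 = t0\<^sup>2" using t0 unfolding r_def by simp
  then show "t = t0" using t t0 by (simp add: power2_eq_iff_nonneg)
qed

lemma convex_on_entrywise_sum:
  fixes g :: "'n::finite \<Rightarrow> 'k::finite \<Rightarrow> real \<Rightarrow> real"
  assumes "\<And>i s. convex_on {0<..} (g i s)"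
  shows "convex_on posorth (\<lambda>V :: real^'k^'n. \<Sum>i\<in>UNIV. \<Sum>s\<in>UNIV. g i s (V $ i $ s))"
  unfolding convex_on_def
proof (intro conjI convex_posorth ballI allI impI)
  fix x y :: "real^'k^'n" and u v :: real
  assume x: "x \<in> posorth" and y: "y \<in> posorth" and uv: "0 \<le> u" "0 \<le> v" "u + v = 1"
  have "(\<Sum>i\<in>UNIV. \<Sum>s\<in>UNIV. g i s ((u *\<^sub>R x + v *\<^sub>R y) $ i $ s))
      \<le> (\<Sum>i\<in>UNIV. \<Sum>s\<in>UNIV. u * g i s (x $ i $ s) + v * g i s (y $ i $ s))"
    using assms posorthD[OF x] posorthD[OF y] uv
    by (intro sum_mono) (simp add: convex_on_def)
  then show "(\<Sum>i\<in>UNIV. \<Sum>s\<in>UNIV. g i s ((u *\<^sub>R x + v *\<^sub>R y) $ i $ s))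
      \<le> u * (\<Sum>i\<in>UNIV. \<Sum>s\<in>UNIV. g i s (x $ i $ s)) + v * (\<Sum>i\<in>UNIV. \<Sum>s\<in>UNIV. g i s (y $ i $ s))"
    by (simp add: sum.distrib sum_distrib_left)
qed

lemma entrywise_sum_unique_minimum:
  fixes g :: "'n::finite \<Rightarrow> 'k::finite \<Rightarrow> real \<Rightarrow> real" and M V :: "real^'k^'n"
  assumes min: "\<And>i s t. t > 0 \<Longrightarrow> g i s (M $ i $ s) \<le> g i s t"
    and unique: "\<And>i s t. t > 0 \<Longrightarrow> g i s t \<le> g i s (M $ i $ s) \<Longrightarrow> t = M $ i $ s"
    and V: "V \<in> posorth"
  shows "(\<Sum>i\<in>UNIV. \<Sum>s\<in>UNIV. g i s (M $ i $ s)) \<le> (\<Sum>i\<in>UNIV. \<Sum>s\<in>UNIV. g i s (V $ i $ s))"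
    and "(\<Sum>i\<in>UNIV. \<Sum>s\<in>UNIV. g i s (V $ i $ s)) \<le> (\<Sum>i\<in>UNIV. \<Sum>s\<in>UNIV. g i s (M $ i $ s))
         \<Longrightarrow> V = M"
proof -
  have le: "g i s (M $ i $ s) \<le> g i s (V $ i $ s)" for i s
    using min posorthD[OF V] .
  then show "(\<Sum>i\<in>UNIV. \<Sum>s\<in>UNIV. g i s (M $ i $ s)) \<le> (\<Sum>i\<in>UNIV. \<Sum>s\<in>UNIV. g i s (V $ i $ s))"
    by (intro sum_mono)
  assume ge: "(\<Sum>i\<in>UNIV. \<Sum>s\<in>UNIV. g i s (V $ i $ s)) \<le> (\<Sum>i\<in>UNIV. \<Sum>s\<in>UNIV. g i s (M $ i $ s))"
  show "V = M"
  proof (rule ccontr)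
    assume "V \<noteq> M"
    then obtain i s where "V $ i $ s \<noteq> M $ i $ s" by (metis vec_eq_iff)
    then have "g i s (M $ i $ s) < g i s (V $ i $ s)"
      using le[of i s] unique[OF posorthD[OF V]] by force
    then have "(\<Sum>s\<in>UNIV. g i s (M $ i $ s)) < (\<Sum>s\<in>UNIV. g i s (V $ i $ s))"
      using le by (intro sum_strict_mono_ex1) auto
    then have "(\<Sum>i\<in>UNIV. \<Sum>s\<in>UNIV. g i s (M $ i $ s)) < (\<Sum>i\<in>UNIV. \<Sum>s\<in>UNIV. g i s (V $ i $ s))"
      using le by (intro sum_strict_mono_ex1) (auto intro: sum_mono)
    with ge show False by simp
  qed
qed

text \<open>The part of \<open>J(V, Y)\<close> that depends on \<open>V\<close>: it is separable in the entries of \<open>V\<close>.\<close>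
definition quadlog :: "real^'k^'n \<Rightarrow> real^'k^'n \<Rightarrow> real^'k^'n \<Rightarrow> real^'k^'n \<Rightarrow> real" where
  "quadlog Y P Q V =
     (\<Sum>i\<in>UNIV. \<Sum>s\<in>UNIV. P $ i $ s * (V $ i $ s)\<^sup>2 / Y $ i $ s - 2 * Y $ i $ s * Q $ i $ s * ln (V $ i $ s))"

lemma quadlog_add: "quadlog Y P Q V + quadlog Y P' Q' V = quadlog Y (P + P') (Q + Q') V"
  by (simp add: quadlog_def sum.distrib[symmetric] algebra_simps add_divide_distrib)

lemma quadlog_scaleR: "c * quadlog Y P Q V = quadlog Y (c *\<^sub>R P) (c *\<^sub>R Q) V"
  by (simp add: quadlog_def sum_distrib_left algebra_simps)

lemma convex_on_quadlog:
  assumes "Y \<in> posorth" "\<And>i j. P $ i $ j \<ge> 0" "\<And>i j. Q $ i $ j \<ge> 0"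
  shows "convex_on posorth (quadlog Y P Q)"
proof -
  have "convex_on posorth (\<lambda>V. \<Sum>i\<in>UNIV. \<Sum>s\<in>UNIV.
          (P $ i $ s / Y $ i $ s) * (V $ i $ s)\<^sup>2 - (2 * Y $ i $ s * Q $ i $ s) * ln (V $ i $ s))"
    using assms posorthD[OF assms(1)]
    by (intro convex_on_entrywise_sum convex_on_square_minus_ln) (auto simp: less_imp_le)
  then show ?thesis unfolding quadlog_def by simp
qed

lemma quadlog_unique_minimum:
  fixes Y P Q :: "real^'k^'n"
  assumes Y: "Y \<in> posorth" and P: "P \<in> posorth" and Q: "Q \<in> posorth"
  defines "M \<equiv> \<chi> i j. Y $ i $ j * sqrt (Q $ i $ j / P $ i $ j)"
  shows "M \<in> posorth \<and> (\<forall>V\<in>posorth. quadlog Y P Q M \<le> quadlog Y P Q V)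
    \<and> (\<forall>V\<in>posorth. quadlog Y P Q V \<le> quadlog Y P Q M \<longrightarrow> V = M)"
proof (intro conjI ballI impI)
  show "M \<in> posorth"
    using posorthD[OF Y] posorthD[OF P] posorthD[OF Q] unfolding M_def posorth_def by simp
  let ?g = "\<lambda>i s t. P $ i $ s * t\<^sup>2 / Y $ i $ s - 2 * Y $ i $ s * Q $ i $ s * ln t"
  have min: "?g i s (M $ i $ s) \<le> ?g i s t" and unique: "?g i s t \<le> ?g i s (M $ i $ s) \<Longrightarrow> t = M $ i $ s"
    if "t > 0" for i s t
    using square_minus_ln_minimum[OF posorthD[OF P] posorthD[OF Q] posorthD[OF Y] that, of i s i s i s]
    unfolding M_def by simp_all
  fix V :: "real^'k^'n" assume V: "V \<in> posorth"
  show "quadlog Y P Q M \<le> quadlog Y P Q V"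
    unfolding quadlog_def by (rule entrywise_sum_unique_minimum(1)[where g = ?g, OF min unique V])
  show "quadlog Y P Q V \<le> quadlog Y P Q M \<Longrightarrow> V = M"
    unfolding quadlog_def by (rule entrywise_sum_unique_minimum(2)[where g = ?g, OF min unique V])
qed

lemma convex_on_plus_const_eq:
  assumes "convex_on S f" "\<And>x. x \<in> S \<Longrightarrow> g x = f x + c"
  shows "convex_on S g"
proof -
  have "convex_on S (\<lambda>x. f x + c)"
    using assms(1) convex_on_imp_convex by (intro convex_on_add) (auto simp: convex_on_const)
  with assms(2) show ?thesis
    unfolding convex_on_def by (metis convex_def)
qed

lemma log_pair_expansion:
  fixes M :: "'b::finite \<Rightarrow> 'b \<Rightarrow> real" and x y :: "'b \<Rightarrow> real"
  assumes sym: "\<And>s l. M s l = M l s" and x: "\<And>s. x s > 0" and y: "\<And>s. y s > 0"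
  shows "(\<Sum>s\<in>UNIV. \<Sum>l\<in>UNIV. M s l * y s * y l * (1 + ln (x s * x l / (y s * y l))))
    = (\<Sum>s\<in>UNIV. \<Sum>l\<in>UNIV. M s l * y s * y l)
      + 2 * (\<Sum>s\<in>UNIV. y s * (\<Sum>l\<in>UNIV. M s l * y l) * (ln (x s) - ln (y s)))"
proof -
  define g where "g s l = M s l * y s * y l * (ln (x s) - ln (y s))" for s l
  have split: "M s l * y s * y l * (1 + ln (x s * x l / (y s * y l))) = M s l * y s * y l + g s l + g l s"
    for s l
    using x[of s] x[of l] y[of s] y[of l]
    by (simp add: g_def ln_div ln_mult sym[of s l] algebra_simps)
  have "(\<Sum>s\<in>UNIV. \<Sum>l\<in>UNIV. g l s) = (\<Sum>s\<in>UNIV. \<Sum>l\<in>UNIV. g s l)"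
    by (rule sum.swap)
  moreover have "(\<Sum>l\<in>UNIV. g s l) = y s * (\<Sum>l\<in>UNIV. M s l * y l) * (ln (x s) - ln (y s))" for s
    by (simp add: g_def sum_distrib_left sum_distrib_right algebra_simps)
  ultimately show ?thesis
    unfolding split by (simp add: sum.distrib)
qed

lemma quadratic_form_le_weighted_squares:
  fixes M :: "'b::finite \<Rightarrow> 'b \<Rightarrow> real" and x y :: "'b \<Rightarrow> real"
  assumes sym: "\<And>s l. M s l = M l s" and M: "\<And>s l. M s l \<ge> 0" and y: "\<And>s. y s > 0"
  shows "(\<Sum>s\<in>UNIV. \<Sum>l\<in>UNIV. x s * M s l * x l) \<le> (\<Sum>s\<in>UNIV. (\<Sum>l\<in>UNIV. M s l * y l) * (x s)\<^sup>2 / y s)"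
proof -
  define g where "g s l = M s l * (x s)\<^sup>2 * y l / y s" for s l
  have pointwise: "x s * M s l * x l \<le> (g s l + g l s) / 2" for s l
  proof -
    have "0 \<le> M s l * (x s * y l - x l * y s)\<^sup>2 / (y s * y l)"
      using M[of s l] y[of s] y[of l] by simp
    also have "\<dots> = g s l + g l s - 2 * (x s * M s l * x l)"
      using y[of s] y[of l] sym[of l s]
      by (simp add: g_def field_simps power2_eq_square)
    finally show ?thesis by simp
  qed
  have "(\<Sum>s\<in>UNIV. \<Sum>l\<in>UNIV. x s * M s l * x l) \<le> (\<Sum>s\<in>UNIV. \<Sum>l\<in>UNIV. (g s l + g l s) / 2)"
    by (intro sum_mono pointwise)
  also have "\<dots> = (\<Sum>s\<in>UNIV. \<Sum>l\<in>UNIV. g s l)"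
    using sum.swap[of g UNIV UNIV]
    by (simp add: sum.distrib add_divide_distrib sum_divide_distrib[symmetric])
  also have "\<dots> = (\<Sum>s\<in>UNIV. (\<Sum>l\<in>UNIV. M s l * y l) * (x s)\<^sup>2 / y s)"
    by (simp add: g_def sum_distrib_left sum_distrib_right sum_divide_distrib[symmetric] mult_ac)
  finally show ?thesis .
qed

definition Fpart :: "real^'k^'k \<Rightarrow> real^'k^'n \<Rightarrow> real^'k^'n \<Rightarrow> real" where
  "Fpart A B V = - 2 * trace (transpose V ** pospart B) + 2 * trace (transpose V ** negpart B)
     + trace (V ** pospart A ** transpose V) - trace (V ** negpart A ** transpose V)"

definition Fgraph :: "real^'n^'n \<Rightarrow> real^'k^'n \<Rightarrow> real" where
  "Fgraph W V = trace (transpose V ** degmat W ** V) - trace (transpose V ** W ** V)"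

lemma Fobj_split:
  "Fobj lam2 A1 A2 B1 B2 WP WQ V = Fpart A1 B1 V + Fpart A2 B2 V + lam2 * (Fgraph WP V + Fgraph WQ V)"
  unfolding Fobj_def Fpart_def Fgraph_def by (simp add: algebra_simps)

lemma Fpart_le_Jpart:
  assumes symA: "transpose A = A" and V: "V \<in> posorth" and Y: "Y \<in> posorth"
  shows "Fpart A B V \<le> Jpart A B V Y"
proof -
  note v = posorthD[OF V] and y = posorthD[OF Y]
  have "(\<Sum>i\<in>UNIV. \<Sum>s\<in>UNIV. pospart B $ i $ s * Y $ i $ s * (1 + ln (V $ i $ s / Y $ i $ s)))
      \<le> trace (transpose V ** pospart B)"
    unfolding trace_transpose_mult
    using mult_left_mono[OF mult_one_plus_ln_div_le[OF v y] pospart_nonneg]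
    by (intro sum_mono) (simp add: mult_ac)
  moreover have "2 * trace (transpose V ** negpart B)
      \<le> (\<Sum>i\<in>UNIV. \<Sum>s\<in>UNIV. negpart B $ i $ s * ((V $ i $ s)\<^sup>2 + (Y $ i $ s)\<^sup>2) / Y $ i $ s)"
    unfolding trace_transpose_mult sum_distrib_left
  proof (intro sum_mono)
    fix i s
    have "2 * V $ i $ s \<le> ((V $ i $ s)\<^sup>2 + (Y $ i $ s)\<^sup>2) / Y $ i $ s"
      using sum_squares_bound[of "V $ i $ s" "Y $ i $ s"] y[of i s]
      by (simp add: field_simps power2_eq_square)
    from mult_right_mono[OF this negpart_nonneg]
    show "2 * (V $ i $ s * negpart B $ i $ s)
        \<le> negpart B $ i $ s * ((V $ i $ s)\<^sup>2 + (Y $ i $ s)\<^sup>2) / Y $ i $ s"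
      by (simp add: mult_ac)
  qed
  moreover have "trace (V ** pospart A ** transpose V)
      \<le> (\<Sum>i\<in>UNIV. \<Sum>s\<in>UNIV. (Y ** pospart A) $ i $ s * (V $ i $ s)\<^sup>2 / Y $ i $ s)"
    unfolding trace_mult_mult_transpose mult_symmetric_component[OF symmetric_pospart[OF symA]]
    using symmetric_matrix_component[OF symmetric_pospart[OF symA]] pospart_nonneg y
    by (intro sum_mono quadratic_form_le_weighted_squares)
  moreover have "(\<Sum>i\<in>UNIV. \<Sum>s\<in>UNIV. \<Sum>l\<in>UNIV. negpart A $ s $ l * Y $ i $ s * Y $ i $ l
              * (1 + ln ((V $ i $ s * V $ i $ l) / (Y $ i $ s * Y $ i $ l))))
      \<le> trace (V ** negpart A ** transpose V)"
    unfolding trace_mult_mult_transpose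
    using mult_left_mono[OF mult_one_plus_ln_div_le[OF mult_pos_pos[OF v v] mult_pos_pos[OF y y]]
        negpart_nonneg]
    by (intro sum_mono) (simp add: mult_ac)
  ultimately show ?thesis unfolding Jpart_def Fpart_def by linarith
qed

lemma Jpart_diagonal:
  assumes symA: "transpose A = A" and V: "V \<in> posorth"
  shows "Jpart A B V V = Fpart A B V"
proof -
  note v_ne = less_imp_neq[OF posorthD[OF V], symmetric]
  have "(V ** pospart A) $ i $ s * (V $ i $ s)\<^sup>2 / V $ i $ s = V $ i $ s * (V ** pospart A) $ i $ s"
    for i s using v_ne by (simp add: power2_eq_square)
  then have "(\<Sum>i\<in>UNIV. \<Sum>s\<in>UNIV. (V ** pospart A) $ i $ s * (V $ i $ s)\<^sup>2 / V $ i $ s)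
      = trace (V ** pospart A ** transpose V)"
    unfolding trace_mult_mult_transpose mult_symmetric_component[OF symmetric_pospart[OF symA]]
    by (simp add: sum_distrib_left mult_ac)
  then show ?thesis
    unfolding Jpart_def Fpart_def trace_transpose_mult trace_mult_mult_transpose
    using v_ne by (simp add: power2_eq_square sum_distrib_left mult_ac)
qed

lemma Fgraph_le_Jgraph:
  assumes W: "\<And>i j. W $ i $ j \<ge> 0" and V: "V \<in> posorth" and Y: "Y \<in> posorth"
  shows "Fgraph W V \<le> Jgraph W V Y"
proof -
  note v = posorthD[OF V] and y = posorthD[OF Y]
  have "(\<Sum>i\<in>UNIV. \<Sum>s\<in>UNIV. (degmat W ** Y) $ i $ s * (V $ i $ s)\<^sup>2 / Y $ i $ s)
      = trace (transpose V ** degmat W ** V)"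
    unfolding matrix_mul_assoc[symmetric] trace_transpose_mult degmat_mult_component
    using less_imp_neq[OF y, symmetric] by (simp add: power2_eq_square mult_ac)
  moreover have "(\<Sum>j\<in>UNIV. \<Sum>l\<in>UNIV. \<Sum>s\<in>UNIV. W $ j $ l * Y $ j $ s * Y $ l $ s
              * (1 + ln ((V $ j $ s * V $ l $ s) / (Y $ j $ s * Y $ l $ s))))
      \<le> trace (transpose V ** W ** V)"
    unfolding trace_transpose_mult_mult
    using mult_left_mono[OF mult_one_plus_ln_div_le[OF mult_pos_pos[OF v v] mult_pos_pos[OF y y]] W]
    by (intro sum_mono) (simp add: mult_ac)
  ultimately show ?thesis unfolding Jgraph_def Fgraph_def by linarith
qed

lemma Jgraph_diagonal:
  assumes V: "V \<in> posorth"
  shows "Jgraph W V V = Fgraph W V"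
proof -
  have "(\<Sum>j\<in>UNIV. \<Sum>l\<in>UNIV. \<Sum>s\<in>UNIV. V $ j $ s * W $ j $ l * V $ l $ s)
      = (\<Sum>j\<in>UNIV. \<Sum>s\<in>UNIV. V $ j $ s * (W ** V) $ j $ s)"
    unfolding matrix_matrix_mult_component sum_distrib_left
    by (rule sum.cong[OF refl], rule sum.swap[THEN trans], simp add: mult_ac)
  then show ?thesis
    unfolding Jgraph_def Fgraph_def matrix_mul_assoc[symmetric] trace_transpose_mult
      trace_transpose_mult_mult degmat_mult_component
    using less_imp_neq[OF posorthD[OF V], symmetric] by (simp add: power2_eq_square mult_ac)
qed

lemma Jpart_eq_quadlog:
  fixes A :: "real^'k^'k" and B Y :: "real^'k^'n"
  assumes symA: "transpose A = A" and Y: "Y \<in> posorth"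
  shows "\<exists>c. \<forall>V\<in>posorth.
    Jpart A B V Y = quadlog Y (negpart B + Y ** pospart A) (pospart B + Y ** negpart A) V + c"
proof
  note y = posorthD[OF Y]
  define k where "k i s = negpart B $ i $ s * Y $ i $ s - 2 * pospart B $ i $ s * Y $ i $ s * (1 - ln (Y $ i $ s))
      + 2 * Y $ i $ s * (Y ** negpart A) $ i $ s * ln (Y $ i $ s)
      - (\<Sum>l\<in>UNIV. negpart A $ s $ l * Y $ i $ s * Y $ i $ l)" for i s
  show "\<forall>V\<in>posorth. Jpart A B V Y
      = quadlog Y (negpart B + Y ** pospart A) (pospart B + Y ** negpart A) V + (\<Sum>i\<in>UNIV. \<Sum>s\<in>UNIV. k i s)"
  proof
    fix V :: "real^'k^'n" assume V: "V \<in> posorth"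
    note v = posorthD[OF V]
    have rows: "(\<Sum>s\<in>UNIV. \<Sum>l\<in>UNIV. negpart A $ s $ l * Y $ i $ s * Y $ i $ l
            * (1 + ln ((V $ i $ s * V $ i $ l) / (Y $ i $ s * Y $ i $ l))))
        = (\<Sum>s\<in>UNIV. (\<Sum>l\<in>UNIV. negpart A $ s $ l * Y $ i $ s * Y $ i $ l)
            + 2 * (Y $ i $ s * (Y ** negpart A) $ i $ s * (ln (V $ i $ s) - ln (Y $ i $ s))))" for i
      unfolding sum.distrib sum_distrib_left[symmetric] mult_symmetric_component[OF symmetric_negpart[OF symA]]
      using symmetric_matrix_component[OF symmetric_negpart[OF symA]] v y
      by (rule log_pair_expansion)
    have "Jpart A B V Y = (\<Sum>i\<in>UNIV. \<Sum>s\<in>UNIV.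
          - 2 * (pospart B $ i $ s * Y $ i $ s * (1 + ln (V $ i $ s / Y $ i $ s)))
          + negpart B $ i $ s * ((V $ i $ s)\<^sup>2 + (Y $ i $ s)\<^sup>2) / Y $ i $ s
          + (Y ** pospart A) $ i $ s * (V $ i $ s)\<^sup>2 / Y $ i $ s
          - ((\<Sum>l\<in>UNIV. negpart A $ s $ l * Y $ i $ s * Y $ i $ l)
            + 2 * (Y $ i $ s * (Y ** negpart A) $ i $ s * (ln (V $ i $ s) - ln (Y $ i $ s)))))"
      unfolding Jpart_def rows by (simp add: sum.distrib sum_subtractf sum_distrib_left sum_negf)
    also have "\<dots> = quadlog Y (negpart B + Y ** pospart A) (pospart B + Y ** negpart A) V
        + (\<Sum>i\<in>UNIV. \<Sum>s\<in>UNIV. k i s)"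
      unfolding quadlog_def sum.distrib[symmetric]
      using v y less_imp_neq[OF v, symmetric] less_imp_neq[OF y, symmetric]
      by (intro sum.cong refl) (simp add: k_def ln_div field_simps power2_eq_square)
    finally show "Jpart A B V Y = quadlog Y (negpart B + Y ** pospart A) (pospart B + Y ** negpart A) V
        + (\<Sum>i\<in>UNIV. \<Sum>s\<in>UNIV. k i s)" .
  qed
qed

lemma Jgraph_eq_quadlog:
  fixes W :: "real^'n^'n" and Y :: "real^'k^'n"
  assumes symW: "transpose W = W" and Y: "Y \<in> posorth"
  shows "\<exists>c. \<forall>V\<in>posorth. Jgraph W V Y = quadlog Y (degmat W ** Y) (W ** Y) V + c"
proof
  note y = posorthD[OF Y]
  define k where "k j s = 2 * Y $ j $ s * (W ** Y) $ j $ s * ln (Y $ j $ s)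
      - (\<Sum>l\<in>UNIV. W $ j $ l * Y $ j $ s * Y $ l $ s)" for j s
  show "\<forall>V\<in>posorth. Jgraph W V Y = quadlog Y (degmat W ** Y) (W ** Y) V + (\<Sum>j\<in>UNIV. \<Sum>s\<in>UNIV. k j s)"
  proof
    fix V :: "real^'k^'n" assume V: "V \<in> posorth"
    note v = posorthD[OF V]
    have columns: "(\<Sum>j\<in>UNIV. \<Sum>l\<in>UNIV. W $ j $ l * Y $ j $ s * Y $ l $ s
            * (1 + ln ((V $ j $ s * V $ l $ s) / (Y $ j $ s * Y $ l $ s))))
        = (\<Sum>j\<in>UNIV. (\<Sum>l\<in>UNIV. W $ j $ l * Y $ j $ s * Y $ l $ s)
            + 2 * (Y $ j $ s * (W ** Y) $ j $ s * (ln (V $ j $ s) - ln (Y $ j $ s))))" for s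
      unfolding sum.distrib sum_distrib_left[symmetric] matrix_matrix_mult_component
      using symmetric_matrix_component[OF symW] v y
      by (rule log_pair_expansion)
    have "(\<Sum>j\<in>UNIV. \<Sum>l\<in>UNIV. \<Sum>s\<in>UNIV. W $ j $ l * Y $ j $ s * Y $ l $ s
            * (1 + ln ((V $ j $ s * V $ l $ s) / (Y $ j $ s * Y $ l $ s))))
        = (\<Sum>s\<in>UNIV. \<Sum>j\<in>UNIV. \<Sum>l\<in>UNIV. W $ j $ l * Y $ j $ s * Y $ l $ s
            * (1 + ln ((V $ j $ s * V $ l $ s) / (Y $ j $ s * Y $ l $ s))))"
      by (rule sum_rotate3)
    also have "\<dots> = (\<Sum>j\<in>UNIV. \<Sum>s\<in>UNIV. (\<Sum>l\<in>UNIV. W $ j $ l * Y $ j $ s * Y $ l $ s)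
            + 2 * (Y $ j $ s * (W ** Y) $ j $ s * (ln (V $ j $ s) - ln (Y $ j $ s))))"
      unfolding columns by (rule sum.swap)
    finally have "Jgraph W V Y = (\<Sum>j\<in>UNIV. \<Sum>s\<in>UNIV.
          (degmat W ** Y) $ j $ s * (V $ j $ s)\<^sup>2 / Y $ j $ s
          - ((\<Sum>l\<in>UNIV. W $ j $ l * Y $ j $ s * Y $ l $ s)
            + 2 * (Y $ j $ s * (W ** Y) $ j $ s * (ln (V $ j $ s) - ln (Y $ j $ s)))))"
      unfolding Jgraph_def by (simp add: sum_subtractf)
    also have "\<dots> = (\<Sum>j\<in>UNIV. \<Sum>s\<in>UNIV.
          (degmat W ** Y) $ j $ s * (V $ j $ s)\<^sup>2 / Y $ j $ s
          - 2 * Y $ j $ s * (W ** Y) $ j $ s * ln (V $ j $ s) + k j s)"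
      unfolding k_def by (simp add: algebra_simps)
    also have "\<dots> = quadlog Y (degmat W ** Y) (W ** Y) V + (\<Sum>j\<in>UNIV. \<Sum>s\<in>UNIV. k j s)"
      unfolding quadlog_def by (simp add: sum.distrib)
    finally show "Jgraph W V Y = quadlog Y (degmat W ** Y) (W ** Y) V + (\<Sum>j\<in>UNIV. \<Sum>s\<in>UNIV. k j s)" .
  qed
qed

locale nmf_objective =
  fixes lam2 :: real and A1 A2 :: "real^'k^'k" and B1 B2 :: "real^'k^'n" and WP WQ :: "real^'n^'n"
  assumes lam2_nonneg: "lam2 \<ge> 0"
    and symmetric: "transpose A1 = A1" "transpose A2 = A2" "transpose WP = WP" "transpose WQ = WQ"
    and weights_nonneg: "\<And>i j. WP $ i $ j \<ge> 0" "\<And>i j. WQ $ i $ j \<ge> 0"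
begin

abbreviation J :: "real^'k^'n \<Rightarrow> real^'k^'n \<Rightarrow> real" where
  "J V Y \<equiv> Jaux lam2 A1 A2 B1 B2 WP WQ V Y"

definition Delta1 :: "real^'k^'n \<Rightarrow> real^'k^'n" where
  "Delta1 Y = pospart B1 + pospart B2 + Y ** (negpart A1 + negpart A2) + lam2 *\<^sub>R ((WP + WQ) ** Y)"

definition Delta2 :: "real^'k^'n \<Rightarrow> real^'k^'n" where
  "Delta2 Y = negpart B1 + negpart B2 + Y ** (pospart A1 + pospart A2)
     + lam2 *\<^sub>R ((degmat WP + degmat WQ) ** Y)"

lemma Fobj_le_J:
  assumes "V \<in> posorth" "Y \<in> posorth"
  shows "Fobj lam2 A1 A2 B1 B2 WP WQ V \<le> J V Y"
proof -
  have "lam2 * (Fgraph WP V + Fgraph WQ V) \<le> lam2 * (Jgraph WP V Y + Jgraph WQ V Y)"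
    using assms weights_nonneg lam2_nonneg by (intro mult_left_mono add_mono Fgraph_le_Jgraph)
  then show ?thesis
    unfolding Fobj_split Jaux_def
    using Fpart_le_Jpart[OF symmetric(1) assms, of B1] Fpart_le_Jpart[OF symmetric(2) assms, of B2] by linarith
qed

lemma J_diagonal: "V \<in> posorth \<Longrightarrow> J V V = Fobj lam2 A1 A2 B1 B2 WP WQ V"
  unfolding Fobj_split Jaux_def by (simp add: Jpart_diagonal symmetric Jgraph_diagonal)

lemma J_eq_quadlog:
  assumes Y: "Y \<in> posorth"
  shows "\<exists>c. \<forall>V\<in>posorth. J V Y = quadlog Y (Delta2 Y) (Delta1 Y) V + c"
proof -
  obtain c1 c2 c3 c4 where
    c1: "\<forall>V\<in>posorth. Jpart A1 B1 V Y = quadlog Y (negpart B1 + Y ** pospart A1) (pospart B1 + Y ** negpart A1) V + c1"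
    and c2: "\<forall>V\<in>posorth. Jpart A2 B2 V Y = quadlog Y (negpart B2 + Y ** pospart A2) (pospart B2 + Y ** negpart A2) V + c2"
    and c3: "\<forall>V\<in>posorth. Jgraph WP V Y = quadlog Y (degmat WP ** Y) (WP ** Y) V + c3"
    and c4: "\<forall>V\<in>posorth. Jgraph WQ V Y = quadlog Y (degmat WQ ** Y) (WQ ** Y) V + c4"
    using Jpart_eq_quadlog[OF symmetric(1) Y] Jpart_eq_quadlog[OF symmetric(2) Y]
      Jgraph_eq_quadlog[OF symmetric(3) Y] Jgraph_eq_quadlog[OF symmetric(4) Y] by metis
  have "Delta2 Y = (negpart B1 + Y ** pospart A1) + (negpart B2 + Y ** pospart A2)
      + lam2 *\<^sub>R (degmat WP ** Y + degmat WQ ** Y)"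
    and "Delta1 Y = (pospart B1 + Y ** negpart A1) + (pospart B2 + Y ** negpart A2)
      + lam2 *\<^sub>R (WP ** Y + WQ ** Y)"
    unfolding Delta1_def Delta2_def by (simp_all add: matrix_add_ldistrib matrix_add_rdistrib algebra_simps)
  then have "quadlog Y (Delta2 Y) (Delta1 Y) V
      = quadlog Y (negpart B1 + Y ** pospart A1) (pospart B1 + Y ** negpart A1) V
        + quadlog Y (negpart B2 + Y ** pospart A2) (pospart B2 + Y ** negpart A2) V
        + lam2 * (quadlog Y (degmat WP ** Y) (WP ** Y) V + quadlog Y (degmat WQ ** Y) (WQ ** Y) V)" for V
    by (simp only: quadlog_add[symmetric] quadlog_scaleR[symmetric])
  then have "J V Y = quadlog Y (Delta2 Y) (Delta1 Y) V + (c1 + c2 + lam2 * (c3 + c4))" if "V \<in> posorth" for V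
    using c1 c2 c3 c4 that unfolding Jaux_def by (simp add: algebra_simps)
  then show ?thesis by blast
qed

lemma Delta_nonneg:
  assumes "Y \<in> posorth"
  shows "Delta1 Y $ i $ j \<ge> 0" and "Delta2 Y $ i $ j \<ge> 0"
  using lam2_nonneg weights_nonneg less_imp_le[OF posorthD[OF assms]]
  by (auto simp: Delta1_def Delta2_def
      intro!: add_nonneg_nonneg mult_nonneg_nonneg matrix_mult_nonneg_component
        pospart_nonneg negpart_nonneg degmat_nonneg)

lemma J_convex:
  assumes "Y \<in> posorth"
  shows "convex_on posorth (\<lambda>V. J V Y)"
proof -
  obtain c where c: "\<forall>V\<in>posorth. J V Y = quadlog Y (Delta2 Y) (Delta1 Y) V + c"
    using J_eq_quadlog[OF assms] by blast
  have "convex_on posorth (quadlog Y (Delta2 Y) (Delta1 Y))"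
    using assms Delta_nonneg(2)[OF assms] Delta_nonneg(1)[OF assms] by (rule convex_on_quadlog)
  then show ?thesis
    by (rule convex_on_plus_const_eq) (use c in blast)
qed

lemma J_unique_minimum:
  assumes Y: "Y \<in> posorth" and "Delta1 Y \<in> posorth" "Delta2 Y \<in> posorth"
  defines "M \<equiv> \<chi> i j. Y $ i $ j * sqrt (Delta1 Y $ i $ j / Delta2 Y $ i $ j)"
  shows "M \<in> posorth \<and> (\<forall>V\<in>posorth. J M Y \<le> J V Y) \<and> (\<forall>V\<in>posorth. J V Y \<le> J M Y \<longrightarrow> V = M)"
proof -
  obtain c where "\<forall>V\<in>posorth. J V Y = quadlog Y (Delta2 Y) (Delta1 Y) V + c"
    using J_eq_quadlog[OF Y] by blast
  with quadlog_unique_minimum[OF Y assms(3,2), folded M_def] show ?thesis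
    by auto
qed

end

theorem mainTheorem2:
  fixes lam2 :: real
    and A1 A2 :: "real^'k^'k"
    and B1 B2 :: "real^'k^'n"
    and WP WQ :: "real^'n^'n"
    and V' :: "real^'k^'n"
  assumes "lam2 \<ge> 0"
    and "transpose A1 = A1" and "transpose A2 = A2"
    and "transpose WP = WP" and "transpose WQ = WQ"
    and "\<forall>i j. WP $ i $ j \<ge> 0" and "\<forall>i j. WQ $ i $ j \<ge> 0"
    and "V' \<in> posorth"
  shows
    "(\<forall>V\<in>posorth. Jaux lam2 A1 A2 B1 B2 WP WQ V V' \<ge> Fobj lam2 A1 A2 B1 B2 WP WQ V)
     \<and> (\<forall>V\<in>posorth. Jaux lam2 A1 A2 B1 B2 WP WQ V V = Fobj lam2 A1 A2 B1 B2 WP WQ V)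
     \<and> convex_on posorth (\<lambda>V. Jaux lam2 A1 A2 B1 B2 WP WQ V V')
     \<and> (let \<Delta>1 = pospart B1 + pospart B2 + V' ** (negpart A1 + negpart A2)
                 + lam2 *\<^sub>R ((WP + WQ) ** V');
            \<Delta>2 = negpart B1 + negpart B2 + V' ** (pospart A1 + pospart A2)
                 + lam2 *\<^sub>R ((degmat WP + degmat WQ) ** V');
            Vs = (\<chi> i j. V' $ i $ j * sqrt (\<Delta>1 $ i $ j / \<Delta>2 $ i $ j))
        in (\<Delta>1 \<in> posorth \<and> \<Delta>2 \<in> posorth) \<longrightarrow>
           (Vs \<in> posorth
            \<and> (\<forall>V\<in>posorth. Jaux lam2 A1 A2 B1 B2 WP WQ Vs V' \<le> Jaux lam2 A1 A2 B1 B2 WP WQ V V')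
            \<and> (\<forall>V\<in>posorth. Jaux lam2 A1 A2 B1 B2 WP WQ V V' \<le> Jaux lam2 A1 A2 B1 B2 WP WQ Vs V'
                             \<longrightarrow> V = Vs)))"
proof -
  interpret nmf_objective lam2 A1 A2 B1 B2 WP WQ
    using assms(1-7) by unfold_locales auto
  show ?thesis
    unfolding Let_def Delta1_def[symmetric] Delta2_def[symmetric]
    using Fobj_le_J[OF _ assms(8)] J_diagonal J_convex[OF assms(8)] J_unique_minimum[OF assms(8)]
    by blast
qed

end
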